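(* Let $(L,d)$ be a complete differential graded Lie algebra (cdgl) and let $M$ be a complete sub differential graded Lie algebra of $(\operatorname{Der} L, D)$, where $D\theta=[d,\theta]$. Let $\delta,\eta\in \operatorname{MC}(M)$. Then $\delta$ and $\eta$ are gauge related if and only if there exists $\theta\in M_0$ such that $$e^\theta\colon (L,d+\delta)\longrightarrow (L,d+\eta)$$ is an isomorphism of differential graded Lie algebras. Moreover, in that case the gauge action is given by $\theta\,\mathscr G\,\delta=\eta$.
   Context: All vector spaces are rational and $\mathbb Z$-graded. $\operatorname{Der} L$ is the graded Lie algebra of derivations of $L$ with bracket $[\theta,\eta]=\theta\circ\eta-(-1)^{|\theta||\eta|}\eta\circ\theta$ and differential $D\theta=d\circ\theta-(-1)^{|\theta|}\theta\circ d$. A cdgl is a dgl $L$ with a decreasing filtration by differential Lie ideals $L=F^1\supset F^2\supset\cdots$, $[F^p,F^q]\subset F^{p+q}$, such that $L\to\varprojlim_n L/F^n$ is an isomorphism. A Maurer–Cartan (MC) element of a dgl $M$ with differential $D$ is $a\in M_{-1}$ with $Da=-\frac12[a,a]$; $\operatorname{MC}(M)$ is the set of these. (For $M\subset \operatorname{Der}L$, $\delta\in M_{-1}$ is MC iff $d+\delta$ is a differential on $L$.) The gauge action of $M_0$ (a group with the Baker–Campbell–Hausdorff product) on $\operatorname{MC}(M)$ is $x\,\mathscr G\,a=\sum_{i\ge0}\frac{\operatorname{ad}_x^i(a)}{i!}-\sum_{i\ge0}\frac{\operatorname{ad}_x^i(Dx)}{(i+1)!}$; two MC elements are gauge related if they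 lie in the same orbit. $e^\theta=\sum_{n\ge0}\theta^n/n!$. *)

theory Defs
  imports Complex_Main
begin

text \<open>
A graded rational vector space is modelled by an ambient type 'a
(an abelian group with a rational scalar multiplication scale, required to be a
Q-vector space) together with its homogeneous components Lg n (n :: int); we require
that the ambient space is the direct sum of the Lg n.  Filtrations are indexed by nat and
only the indices n >= 1 are meaningful (F 1 is the whole space).
Derivations are maps 'a => 'a; the graded Lie algebra Der L is modelled by its
homogeneous components, and the sub dgl M by its homogeneous components Mg k.
\<close>

definition gsgn :: "int \<Rightarrow> rat" where
  "gsgn k = (if even k then 1 else -1)"

definition direct_graded :: "(int \<Rightarrow> 'a::ab_group_add set) \<Rightarrow> bool" where
  "direct_graded Lg \<longleftrightarrow>
     (\<forall>x. \<exists>!c. (\<forall>n. c n \<in> Lg n) \<and> finite {n. c n \<noteq> 0} \<and> x = (\<Sum>n\<in>{n. c n \<noteq> 0}. c n))"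

definition gcomp :: "(int \<Rightarrow> 'a::ab_group_add set) \<Rightarrow> 'a \<Rightarrow> int \<Rightarrow> 'a" where
  "gcomp Lg x = (THE c. (\<forall>n. c n \<in> Lg n) \<and> finite {n. c n \<noteq> 0} \<and> x = (\<Sum>n\<in>{n. c n \<noteq> 0}. c n))"

definition graded_lie_algebra ::
  "(rat \<Rightarrow> 'a::ab_group_add \<Rightarrow> 'a) \<Rightarrow> (int \<Rightarrow> 'a set) \<Rightarrow> ('a \<Rightarrow> 'a \<Rightarrow> 'a) \<Rightarrow> bool" where
  "graded_lie_algebra scale Lg br \<longleftrightarrow>
     vector_space scale \<and>
     (\<forall>n. module.subspace scale (Lg n)) \<and>
     direct_graded Lg \<and>
     (\<forall>x. Vector_Spaces.linear scale scale (br x)) \<and>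
     (\<forall>y. Vector_Spaces.linear scale scale (\<lambda>x. br x y)) \<and>
     (\<forall>p q x y. x \<in> Lg p \<longrightarrow> y \<in> Lg q \<longrightarrow> br x y \<in> Lg (p + q)) \<and>
     (\<forall>p q x y. x \<in> Lg p \<longrightarrow> y \<in> Lg q \<longrightarrow> br x y = scale (- gsgn (p * q)) (br y x)) \<and>
     (\<forall>p q r x y z. x \<in> Lg p \<longrightarrow> y \<in> Lg q \<longrightarrow> z \<in> Lg r \<longrightarrow>
        br x (br y z) = br (br x y) z + scale (gsgn (p * q)) (br y (br x z)))"

definition derivation ::
  "(rat \<Rightarrow> 'a::ab_group_add \<Rightarrow> 'a) \<Rightarrow> (int \<Rightarrow> 'a set) \<Rightarrow> ('a \<Rightarrow> 'a \<Rightarrow> 'a) \<Rightarrow> int \<Rightarrow> ('a \<Rightarrow> 'a) \<Rightarrow> bool" where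
  "derivation scale Lg br k \<theta> \<longleftrightarrow>
     Vector_Spaces.linear scale scale \<theta> \<and>
     (\<forall>n x. x \<in> Lg n \<longrightarrow> \<theta> x \<in> Lg (n + k)) \<and>
     (\<forall>p x y. x \<in> Lg p \<longrightarrow> \<theta> (br x y) = br (\<theta> x) y + scale (gsgn (k * p)) (br x (\<theta> y)))"

definition dgl ::
  "(rat \<Rightarrow> 'a::ab_group_add \<Rightarrow> 'a) \<Rightarrow> (int \<Rightarrow> 'a set) \<Rightarrow> ('a \<Rightarrow> 'a \<Rightarrow> 'a) \<Rightarrow> ('a \<Rightarrow> 'a) \<Rightarrow> bool" where
  "dgl scale Lg br d \<longleftrightarrow>
     graded_lie_algebra scale Lg br \<and> derivation scale Lg br (-1) d \<and> (\<forall>x. d (d x) = 0)"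

text \<open>Completeness of V with respect to a filtration F (indices >= 1), expressed as:
  V -> lim V/(F n \<inter> V) is bijective (Hausdorff + every compatible sequence has a limit).
  z is the zero of the ambient type.\<close>
definition filt_complete :: "'b::minus set \<Rightarrow> (nat \<Rightarrow> 'b set) \<Rightarrow> 'b \<Rightarrow> bool" where
  "filt_complete V F z \<longleftrightarrow>
     (\<forall>x\<in>V. (\<forall>n\<ge>1. x \<in> F n) \<longrightarrow> x = z) \<and>
     (\<forall>s. (\<forall>n. s n \<in> V) \<longrightarrow> (\<forall>n m. 1 \<le> n \<longrightarrow> n \<le> m \<longrightarrow> s m - s n \<in> F n) \<longrightarrow>
          (\<exists>y\<in>V. \<forall>n\<ge>1. y - s n \<in> F n))"

definition cdgl ::
  "(rat \<Rightarrow> 'a::ab_group_add \<Rightarrow> 'a) \<Rightarrow> (int \<Rightarrow> 'a set) \<Rightarrow> ('a \<Rightarrow> 'a \<Rightarrow> 'a) \<Rightarrow> ('a \<Rightarrow> 'a)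
     \<Rightarrow> (nat \<Rightarrow> 'a set) \<Rightarrow> bool" where
  "cdgl scale Lg br d F \<longleftrightarrow>
     dgl scale Lg br d \<and>
     F 1 = UNIV \<and>
     (\<forall>n\<ge>1. F (Suc n) \<subseteq> F n) \<and>
     (\<forall>n\<ge>1. module.subspace scale (F n)) \<and>
     (\<forall>n\<ge>1. \<forall>x\<in>F n. \<forall>k. gcomp Lg x k \<in> F n) \<and>
     (\<forall>n\<ge>1. \<forall>x\<in>F n. d x \<in> F n) \<and>
     (\<forall>n\<ge>1. \<forall>x y. y \<in> F n \<longrightarrow> br x y \<in> F n) \<and>
     (\<forall>p\<ge>1. \<forall>q\<ge>1. \<forall>x y. x \<in> F p \<longrightarrow> y \<in> F q \<longrightarrow> br x y \<in> F (p + q)) \<and>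
     (\<forall>k. filt_complete (Lg k) F 0)"

definition der_br ::
  "(rat \<Rightarrow> 'a::ab_group_add \<Rightarrow> 'a) \<Rightarrow> int \<Rightarrow> int \<Rightarrow> ('a \<Rightarrow> 'a) \<Rightarrow> ('a \<Rightarrow> 'a) \<Rightarrow> ('a \<Rightarrow> 'a)" where
  "der_br scale k l \<theta> \<eta> = (\<lambda>x. \<theta> (\<eta> x) - scale (gsgn (k * l)) (\<eta> (\<theta> x)))"

definition der_D ::
  "(rat \<Rightarrow> 'a::ab_group_add \<Rightarrow> 'a) \<Rightarrow> ('a \<Rightarrow> 'a) \<Rightarrow> int \<Rightarrow> ('a \<Rightarrow> 'a) \<Rightarrow> ('a \<Rightarrow> 'a)" where
  "der_D scale d k \<theta> = (\<lambda>x. d (\<theta> x) - scale (gsgn k) (\<theta> (d x)))"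

definition complete_sub_dgl ::
  "(rat \<Rightarrow> 'a::ab_group_add \<Rightarrow> 'a) \<Rightarrow> (int \<Rightarrow> 'a set) \<Rightarrow> ('a \<Rightarrow> 'a \<Rightarrow> 'a) \<Rightarrow> ('a \<Rightarrow> 'a)
     \<Rightarrow> (nat \<Rightarrow> 'a set) \<Rightarrow> (int \<Rightarrow> ('a \<Rightarrow> 'a) set) \<Rightarrow> (nat \<Rightarrow> ('a \<Rightarrow> 'a) set) \<Rightarrow> bool" where
  "complete_sub_dgl scale Lg br d F Mg MF \<longleftrightarrow>
     (\<forall>k. \<forall>\<theta>\<in>Mg k. derivation scale Lg br k \<theta>) \<and>
     (\<forall>k. (\<lambda>_. 0) \<in> Mg k) \<and>
     (\<forall>k. \<forall>\<theta>\<in>Mg k. \<forall>\<eta>\<in>Mg k. (\<lambda>x. \<theta> x + \<eta> x) \<in> Mg k) \<and>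
     (\<forall>k c. \<forall>\<theta>\<in>Mg k. (\<lambda>x. scale c (\<theta> x)) \<in> Mg k) \<and>
     (\<forall>k l. \<forall>\<theta>\<in>Mg k. \<forall>\<eta>\<in>Mg l. der_br scale k l \<theta> \<eta> \<in> Mg (k + l)) \<and>
     (\<forall>k. \<forall>\<theta>\<in>Mg k. der_D scale d k \<theta> \<in> Mg (k - 1)) \<and>
     \<comment> \<open>filtration of M\<close>
     (\<forall>k. Mg k \<subseteq> MF 1) \<and>
     (\<forall>n\<ge>1. MF (Suc n) \<subseteq> MF n) \<and>
     (\<forall>n\<ge>1. (\<lambda>_. 0) \<in> MF n) \<and>
     (\<forall>n\<ge>1. \<forall>k. \<forall>\<theta>\<in>Mg k \<inter> MF n. \<forall>\<eta>\<in>Mg k \<inter> MF n. (\<lambda>x. \<theta> x + \<eta> x) \<in> MF n) \<and>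
     (\<forall>n\<ge>1. \<forall>k c. \<forall>\<theta>\<in>Mg k \<inter> MF n. (\<lambda>x. scale c (\<theta> x)) \<in> MF n) \<and>
     (\<forall>n\<ge>1. \<forall>k. \<forall>\<theta>\<in>Mg k \<inter> MF n. der_D scale d k \<theta> \<in> MF n) \<and>
     (\<forall>p\<ge>1. \<forall>q\<ge>1. \<forall>k l. \<forall>\<theta>\<in>Mg k \<inter> MF p. \<forall>\<eta>\<in>Mg l \<inter> MF q.
         der_br scale k l \<theta> \<eta> \<in> MF (p + q)) \<and>
     (\<forall>k. filt_complete (Mg k) MF (\<lambda>_. 0)) \<and>
     \<comment> \<open>compatibility with the filtration of L\<close>
     (\<forall>p\<ge>1. \<forall>q\<ge>1. \<forall>k. \<forall>\<theta>\<in>Mg k \<inter> MF p. \<forall>x\<in>F q. \<theta> x \<in> F (p + q))"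

definition MC ::
  "(rat \<Rightarrow> 'a::ab_group_add \<Rightarrow> 'a) \<Rightarrow> ('a \<Rightarrow> 'a) \<Rightarrow> (int \<Rightarrow> ('a \<Rightarrow> 'a) set) \<Rightarrow> ('a \<Rightarrow> 'a) \<Rightarrow> bool" where
  "MC scale d Mg \<delta> \<longleftrightarrow>
     \<delta> \<in> Mg (-1) \<and> der_D scale d (-1) \<delta> = (\<lambda>x. scale (- 1/2) (der_br scale (-1) (-1) \<delta> \<delta> x))"

definition filt_lim :: "'b::minus set \<Rightarrow> (nat \<Rightarrow> 'b set) \<Rightarrow> (nat \<Rightarrow> 'b) \<Rightarrow> 'b \<Rightarrow> bool" where
  "filt_lim V F s y \<longleftrightarrow> y \<in> V \<and> (\<forall>n\<ge>1. \<exists>N. \<forall>k\<ge>N. s k - y \<in> F n)"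

definition filt_Lim :: "'b::minus set \<Rightarrow> (nat \<Rightarrow> 'b set) \<Rightarrow> (nat \<Rightarrow> 'b) \<Rightarrow> 'b" where
  "filt_Lim V F s = (THE y. filt_lim V F s y)"

definition filt_exp ::
  "(rat \<Rightarrow> 'a::ab_group_add \<Rightarrow> 'a) \<Rightarrow> (nat \<Rightarrow> 'a set) \<Rightarrow> ('a \<Rightarrow> 'a) \<Rightarrow> 'a \<Rightarrow> 'a" where
  "filt_exp scale F \<theta> x =
     filt_Lim UNIV F (\<lambda>k. \<Sum>n<k. scale (1 / fact n) ((\<theta> ^^ n) x))"

definition gauge ::
  "(rat \<Rightarrow> 'a::ab_group_add \<Rightarrow> 'a) \<Rightarrow> ('a \<Rightarrow> 'a) \<Rightarrow> (int \<Rightarrow> ('a \<Rightarrow> 'a) set) \<Rightarrow> (nat \<Rightarrow> ('a \<Rightarrow> 'a) set)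
     \<Rightarrow> ('a \<Rightarrow> 'a) \<Rightarrow> ('a \<Rightarrow> 'a) \<Rightarrow> ('a \<Rightarrow> 'a)" where
  "gauge scale d Mg MF x a =
     (let ad = der_br scale 0 (-1) x;
          S1 = filt_Lim (Mg (-1)) MF
                 (\<lambda>k y. \<Sum>i<k. scale (1 / fact i) ((ad ^^ i) a y));
          S2 = filt_Lim (Mg (-1)) MF
                 (\<lambda>k y. \<Sum>i<k. scale (1 / fact (Suc i)) ((ad ^^ i) (der_D scale d 0 x) y))
      in (\<lambda>y. S1 y - S2 y))"

definition gauge_related ::
  "(rat \<Rightarrow> 'a::ab_group_add \<Rightarrow> 'a) \<Rightarrow> ('a \<Rightarrow> 'a) \<Rightarrow> (int \<Rightarrow> ('a \<Rightarrow> 'a) set) \<Rightarrow> (nat \<Rightarrow> ('a \<Rightarrow> 'a) set)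
     \<Rightarrow> ('a \<Rightarrow> 'a) \<Rightarrow> ('a \<Rightarrow> 'a) \<Rightarrow> bool" where
  "gauge_related scale d Mg MF \<delta> \<eta> \<longleftrightarrow> (\<exists>x\<in>Mg 0. gauge scale d Mg MF x \<delta> = \<eta>)"

definition dgl_iso ::
  "(rat \<Rightarrow> 'a::ab_group_add \<Rightarrow> 'a) \<Rightarrow> (int \<Rightarrow> 'a set) \<Rightarrow> ('a \<Rightarrow> 'a \<Rightarrow> 'a)
     \<Rightarrow> ('a \<Rightarrow> 'a) \<Rightarrow> ('a \<Rightarrow> 'a) \<Rightarrow> ('a \<Rightarrow> 'a) \<Rightarrow> bool" where
  "dgl_iso scale Lg br f d1 d2 \<longleftrightarrow>
     bij f \<and> Vector_Spaces.linear scale scale f \<and>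
     (\<forall>n. \<forall>x\<in>Lg n. f x \<in> Lg n) \<and>
     (\<forall>x y. f (br x y) = br (f x) (f y)) \<and>
     (\<forall>x. f (d1 x) = d2 (f x))"

end

theory Submission
  imports Defs
begin

text \<open>Every \<theta> in M_0 raises the filtration degree of L, so e^\<theta> = \<Sum> \<theta>^n/n! converges in the
  complete filtered L; the Leibniz rule for \<theta>^n and the Cauchy product make it a Lie algebra
  automorphism, with inverse e^-\<theta>. Expanding ad_\<theta>^n = (L_\<theta> - R_\<theta>)^n binomially gives the
  conjugation formula e^\<theta> \<circ> \<phi> \<circ> e^-\<theta> = \<Sum> ad_\<theta>^n \<phi> / n! for every linear, filtration
  preserving \<phi>. For \<phi> = d + \<delta> the right-hand side is d + \<theta> \<G> \<delta>, because D\<theta> = - ad_\<theta> d.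
  Hence e^\<theta> is an isomorphism (L, d + \<delta>) \<rightarrow> (L, d + \<theta> \<G> \<delta>); conversely, if e^\<theta> intertwines
  d + \<delta> and d + \<eta>, then \<eta> = \<theta> \<G> \<delta> since e^\<theta> is bijective.\<close>

locale complete_dgl =
  fixes scale :: "rat \<Rightarrow> 'a::ab_group_add \<Rightarrow> 'a"
    and Lg :: "int \<Rightarrow> 'a set"
    and br :: "'a \<Rightarrow> 'a \<Rightarrow> 'a"
    and d :: "'a \<Rightarrow> 'a"
    and F :: "nat \<Rightarrow> 'a set"
  assumes graded_lie_algebra: "graded_lie_algebra scale Lg br"
    and linear_d: "Vector_Spaces.linear scale scale d"
    and F_1: "F 1 = UNIV"
    and F_Suc_subset: "n \<ge> 1 \<Longrightarrow> F (Suc n) \<subseteq> F n"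
    and F_subspace: "n \<ge> 1 \<Longrightarrow> module.subspace scale (F n)"
    and F_gcomp: "n \<ge> 1 \<Longrightarrow> x \<in> F n \<Longrightarrow> gcomp Lg x k \<in> F n"
    and F_d: "n \<ge> 1 \<Longrightarrow> x \<in> F n \<Longrightarrow> d x \<in> F n"
    and F_br_right: "n \<ge> 1 \<Longrightarrow> y \<in> F n \<Longrightarrow> br x y \<in> F n"
    and F_br: "p \<ge> 1 \<Longrightarrow> q \<ge> 1 \<Longrightarrow> x \<in> F p \<Longrightarrow> y \<in> F q \<Longrightarrow> br x y \<in> F (p + q)"
    and Lg_complete: "filt_complete (Lg k) F 0"

lemma complete_dgl_if_cdgl:
  assumes "cdgl scale Lg br d F"
  shows "complete_dgl scale Lg br d F"
  using assms by (simp add: complete_dgl_def cdgl_def dgl_def derivation_def)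

context complete_dgl
begin

sublocale vs: vector_space scale
  using graded_lie_algebra by (simp add: graded_lie_algebra_def)

sublocale vsp: vector_space_pair scale scale ..

abbreviation linear_map :: "('a \<Rightarrow> 'a) \<Rightarrow> bool" where
  "linear_map f \<equiv> Vector_Spaces.linear scale scale f"

lemma linear_br_left: "linear_map (\<lambda>x. br x y)"
  using graded_lie_algebra by (simp add: graded_lie_algebra_def)

lemma linear_br_right: "linear_map (br x)"
  using graded_lie_algebra by (simp add: graded_lie_algebra_def)

lemma Lg_subspace: "vs.subspace (Lg n)"
  using graded_lie_algebra by (simp add: graded_lie_algebra_def)

lemma graded_decomposition: "\<exists>c S. finite S \<and> (\<forall>n. c n \<in> Lg n) \<and> x = sum c S"
  using graded_lie_algebra unfolding graded_lie_algebra_def direct_graded_def by metis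

text \<open>The filtration F starts at F 1 = L; Fil is the same filtration indexed from 0.\<close>
definition Fil :: "nat \<Rightarrow> 'a set" where
  "Fil j = F (Suc j)"

lemma Fil_0 [simp]: "Fil 0 = UNIV"
  using F_1 by (simp add: Fil_def)

lemma Fil_subspace: "vs.subspace (Fil j)"
  by (simp add: Fil_def F_subspace)

lemmas Fil_zero = vs.subspace_0[OF Fil_subspace]
  and Fil_add = vs.subspace_add[OF Fil_subspace]
  and Fil_diff = vs.subspace_diff[OF Fil_subspace]
  and Fil_neg = vs.subspace_neg[OF Fil_subspace]
  and Fil_scale = vs.subspace_scale[OF Fil_subspace]
  and Fil_sum = vs.subspace_sum[OF Fil_subspace]

lemma Fil_Suc_subset: "Fil (Suc j) \<subseteq> Fil j"
  by (simp add: Fil_def F_Suc_subset)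

lemma Fil_antimono: "j \<le> k \<Longrightarrow> Fil k \<subseteq> Fil j"
  by (induction k rule: dec_induct) (use Fil_Suc_subset in auto)

lemma Fil_mono_member: "x \<in> Fil k \<Longrightarrow> j \<le> k \<Longrightarrow> x \<in> Fil j"
  using Fil_antimono by blast

lemma d_Fil: "x \<in> Fil j \<Longrightarrow> d x \<in> Fil j"
  by (simp add: Fil_def F_d)

lemma br_Fil_right: "y \<in> Fil j \<Longrightarrow> br x y \<in> Fil j"
  by (simp add: Fil_def F_br_right)

lemma br_Fil: "x \<in> Fil i \<Longrightarrow> y \<in> Fil j \<Longrightarrow> br x y \<in> Fil (i + j)"
proof -
  assume "x \<in> Fil i" "y \<in> Fil j"
  then have "br x y \<in> Fil (Suc (i + j))"
    using F_br[of "Suc i" "Suc j" x y] by (simp add: Fil_def)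
  then show ?thesis
    using Fil_mono_member[of _ "Suc (i + j)" "i + j"] by simp
qed

lemma br_Fil_left: "x \<in> Fil j \<Longrightarrow> br x y \<in> Fil j"
  using br_Fil[of x j y 0] by simp

text \<open>The homogeneous components of a - b lie in every F n (F is compatible with the grading),
  hence vanish because each Lg k is complete, in particular separated.\<close>
lemma eq_if_diff_in_Fil:
  assumes "\<And>j. a - b \<in> Fil j"
  shows "a = b"
proof -
  obtain c where c: "(\<forall>n. c n \<in> Lg n) \<and> finite {n. c n \<noteq> 0} \<and> a - b = (\<Sum>n\<in>{n. c n \<noteq> 0}. c n)"
    and c_unique: "\<And>c'. (\<forall>n. c' n \<in> Lg n) \<and> finite {n. c' n \<noteq> 0}
      \<and> a - b = (\<Sum>n\<in>{n. c' n \<noteq> 0}. c' n) \<Longrightarrow> c' = c"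
    using graded_lie_algebra unfolding graded_lie_algebra_def direct_graded_def by metis
  have "gcomp Lg (a - b) = c"
    unfolding gcomp_def using c c_unique by (rule the_equality)
  moreover have "a - b \<in> F n" if "n \<ge> 1" for n
    using assms[of "n - 1"] that by (simp add: Fil_def)
  ultimately have "\<forall>n\<ge>1. c k \<in> F n" for k
    using F_gcomp by metis
  then have "c k = 0" for k
    using Lg_complete c unfolding filt_complete_def by blast
  then show ?thesis
    using c by simp
qed

lemma Lg_Cauchy_limit:
  assumes s: "\<And>k. s k \<in> Lg m" and Cauchy: "\<And>j k. j \<le> k \<Longrightarrow> s k - s j \<in> Fil j"
  shows "\<exists>y\<in>Lg m. \<forall>k. y - s k \<in> Fil k"
proof -
  have "\<forall>n k. 1 \<le> n \<longrightarrow> n \<le> k \<longrightarrow> s k - s n \<in> F n"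
  proof (intro allI impI)
    fix n k :: nat
    assume "1 \<le> n" "n \<le> k"
    then show "s k - s n \<in> F n"
      using Cauchy[of n k] F_Suc_subset[of n] by (auto simp: Fil_def)
  qed
  then obtain y where y: "y \<in> Lg m" "\<And>n. n \<ge> 1 \<Longrightarrow> y - s n \<in> F n"
    using Lg_complete[of m] s unfolding filt_complete_def by blast
  have "y - s k \<in> Fil k" for k
  proof -
    have "y - s (Suc k) \<in> Fil k"
      using y(2)[of "Suc k"] by (simp add: Fil_def)
    then show ?thesis
      using Fil_add[OF _ Cauchy[of k "Suc k"]] by force
  qed
  then show ?thesis
    using y(1) by blast
qed

lemma filt_Lim_UNIV_eqI:
  assumes y: "\<And>k. y - s k \<in> Fil k"
  shows "filt_Lim UNIV F s = y"
proof -
  have s_y: "s k - y \<in> Fil j" if "j \<le> k" for j k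
    using Fil_neg[OF y[of k]] Fil_mono_member that by simp
  have "filt_lim UNIV F s y"
    unfolding filt_lim_def
  proof (intro conjI allI impI exI)
    fix n k :: nat
    assume "1 \<le> n" "n \<le> k"
    then show "s k - y \<in> F n"
      using s_y[of "n - 1" k] by (simp add: Fil_def)
  qed simp
  moreover have "y' = y" if lim': "filt_lim UNIV F s y'" for y'
  proof (rule eq_if_diff_in_Fil)
    fix j
    obtain N where N: "\<forall>k\<ge>N. s k - y' \<in> Fil j"
      using lim'[unfolded filt_lim_def, THEN conjunct2, rule_format, of "Suc j"]
      unfolding Fil_def by auto
    have "y' - y = (s (max N j) - y) - (s (max N j) - y')"
      by simp
    then show "y' - y \<in> Fil j"
      using Fil_diff[OF s_y[of j "max N j"] N[rule_format, of "max N j"]] by simp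
  qed
  ultimately show ?thesis
    unfolding filt_Lim_def by (rule the_equality)
qed

lemma linear_funpow: "linear_map f \<Longrightarrow> linear_map (f ^^ n)"
  by (induction n) (auto simp: vs.linear_id Vector_Spaces.linear_compose simp del: id_apply)

lemma sum_choose_Suc:
  "(\<Sum>k\<le>Suc n. scale (of_nat (Suc n choose k)) (T k (Suc n - k))) =
   (\<Sum>k\<le>n. scale (of_nat (n choose k)) (T (Suc k) (n - k))) +
   (\<Sum>k\<le>n. scale (of_nat (n choose k)) (T k (Suc (n - k))))"
proof -
  have "(\<Sum>k\<le>Suc n. scale (of_nat (Suc n choose k)) (T k (Suc n - k))) =
     T 0 (Suc n) + (\<Sum>k\<le>n. scale (of_nat (n choose k)) (T (Suc k) (n - k)))
      + (\<Sum>k\<le>n. scale (of_nat (n choose Suc k)) (T (Suc k) (n - k)))"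
    unfolding sum.atMost_Suc_shift by (simp add: vs.scale_left_distrib sum.distrib add.assoc)
  moreover have "(\<Sum>k\<le>Suc n. scale (of_nat (n choose k)) (T k (Suc n - k))) =
      (\<Sum>k\<le>n. scale (of_nat (n choose k)) (T k (Suc (n - k))))"
    by (simp add: sum.atMost_Suc Suc_diff_le)
  moreover have "(\<Sum>k\<le>Suc n. scale (of_nat (n choose k)) (T k (Suc n - k))) =
      T 0 (Suc n) + (\<Sum>k\<le>n. scale (of_nat (n choose Suc k)) (T (Suc k) (n - k)))"
    unfolding sum.atMost_Suc_shift by simp
  ultimately show ?thesis
    by (simp add: algebra_simps)
qed

definition raising_derivation :: "('a \<Rightarrow> 'a) \<Rightarrow> bool" where
  "raising_derivation \<theta> \<longleftrightarrow> linear_map \<theta> \<and> (\<forall>n x. x \<in> Lg n \<longrightarrow> \<theta> x \<in> Lg n) \<and>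
     (\<forall>x y. \<theta> (br x y) = br (\<theta> x) y + br x (\<theta> y)) \<and> (\<forall>j x. x \<in> Fil j \<longrightarrow> \<theta> x \<in> Fil (Suc j))"

lemma raising_derivationD:
  assumes "raising_derivation \<theta>"
  shows "linear_map \<theta>" "x \<in> Lg n \<Longrightarrow> \<theta> x \<in> Lg n"
    "\<theta> (br x y) = br (\<theta> x) y + br x (\<theta> y)" "x \<in> Fil j \<Longrightarrow> \<theta> x \<in> Fil (Suc j)"
  using assms unfolding raising_derivation_def by blast+

lemma raising_derivation_uminus: "raising_derivation \<theta> \<Longrightarrow> raising_derivation (\<lambda>x. - \<theta> x)"
  unfolding raising_derivation_def
  using vsp.linear_compose_neg vs.subspace_neg[OF Lg_subspace] Fil_neg
    vsp.linear_neg[OF linear_br_left] vsp.linear_neg[OF linear_br_right] by auto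

lemma funpow_Fil: "raising_derivation \<theta> \<Longrightarrow> x \<in> Fil j \<Longrightarrow> (\<theta> ^^ n) x \<in> Fil (j + n)"
  by (induction n) (auto dest: raising_derivationD(4))

lemma funpow_Lg: "raising_derivation \<theta> \<Longrightarrow> x \<in> Lg m \<Longrightarrow> (\<theta> ^^ n) x \<in> Lg m"
  by (induction n) (auto dest: raising_derivationD(2))

lemma linear_funpow_raising:
  "raising_derivation \<theta> \<Longrightarrow> linear_map (\<theta> ^^ n)"
  using linear_funpow raising_derivationD(1) by blast

lemma funpow_br:
  assumes \<theta>: "raising_derivation \<theta>"
  shows "(\<theta> ^^ n) (br x y) =
    (\<Sum>k\<le>n. scale (of_nat (n choose k)) (br ((\<theta> ^^ k) x) ((\<theta> ^^ (n - k)) y)))"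
proof (induction n)
  case (Suc n)
  let ?T = "\<lambda>k j. br ((\<theta> ^^ k) x) ((\<theta> ^^ j) y)"
  have lin: "linear_map \<theta>"
    using raising_derivationD(1)[OF \<theta>] .
  have "(\<theta> ^^ Suc n) (br x y) = (\<Sum>k\<le>n. scale (of_nat (n choose k)) (\<theta> (?T k (n - k))))"
    by (simp add: Suc vsp.linear_sum[OF lin] vsp.linear_scale[OF lin])
  also have "\<dots> = (\<Sum>k\<le>n. scale (of_nat (n choose k)) (?T (Suc k) (n - k))) +
     (\<Sum>k\<le>n. scale (of_nat (n choose k)) (?T k (Suc (n - k))))"
    by (simp add: raising_derivationD(3)[OF \<theta>] vs.scale_right_distrib sum.distrib)
  also have "\<dots> = (\<Sum>k\<le>Suc n. scale (of_nat (Suc n choose k)) (?T k (Suc n - k)))"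
    by (rule sum_choose_Suc[symmetric])
  finally show ?case .
qed simp

definition exp_sum :: "('a \<Rightarrow> 'a) \<Rightarrow> nat \<Rightarrow> 'a \<Rightarrow> 'a" where
  "exp_sum \<theta> k x = (\<Sum>n<k. scale (1 / fact n) ((\<theta> ^^ n) x))"

lemma linear_exp_sum: "raising_derivation \<theta> \<Longrightarrow> linear_map (exp_sum \<theta> k)"
  unfolding exp_sum_def[abs_def]
  by (intro vsp.linear_compose_sum ballI vsp.linear_compose_scale_right linear_funpow_raising)

lemma exp_sum_Lg: "raising_derivation \<theta> \<Longrightarrow> x \<in> Lg m \<Longrightarrow> exp_sum \<theta> k x \<in> Lg m"
  unfolding exp_sum_def
  by (intro vs.subspace_sum[OF Lg_subspace] vs.subspace_scale[OF Lg_subspace] funpow_Lg)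

lemma exp_sum_Fil:
  assumes \<theta>: "raising_derivation \<theta>" and x: "x \<in> Fil j"
  shows "exp_sum \<theta> k x \<in> Fil j"
  unfolding exp_sum_def
  using Fil_mono_member[OF funpow_Fil[OF \<theta> x]] by (intro Fil_sum Fil_scale) simp

lemma exp_sum_Cauchy:
  assumes \<theta>: "raising_derivation \<theta>" and "j \<le> k"
  shows "exp_sum \<theta> k x - exp_sum \<theta> j x \<in> Fil j"
  using \<open>j \<le> k\<close>
proof (induction k rule: dec_induct)
  case (step k)
  have "(\<theta> ^^ k) x \<in> Fil j"
    using funpow_Fil[OF \<theta>, of x 0 k] Fil_mono_member step(1) by simp
  have "exp_sum \<theta> (Suc k) x - exp_sum \<theta> j x =
      (exp_sum \<theta> k x - exp_sum \<theta> j x) + scale (1 / fact k) ((\<theta> ^^ k) x)"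
    by (simp add: exp_sum_def)
  also have "\<dots> \<in> Fil j"
    by (intro Fil_add step(3) Fil_scale \<open>(\<theta> ^^ k) x \<in> Fil j\<close>)
  finally show ?case .
qed (simp add: Fil_zero)

text \<open>Convergence is first obtained in each (complete) homogeneous component Lg m and then
  extended to all of L through the finite decomposition into components.\<close>
lemma filt_exp_approx:
  assumes \<theta>: "raising_derivation \<theta>"
  shows "filt_exp scale F \<theta> x - exp_sum \<theta> k x \<in> Fil k"
proof -
  obtain c S where c: "finite S" "\<forall>n. c n \<in> Lg n" "x = sum c S"
    using graded_decomposition by blast
  have "\<forall>n. \<exists>y. \<forall>k. y - exp_sum \<theta> k (c n) \<in> Fil k"
    using Lg_Cauchy_limit[OF exp_sum_Lg[OF \<theta>] exp_sum_Cauchy[OF \<theta>]] c(2) by blast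
  then obtain y where y: "\<And>n k. y n - exp_sum \<theta> k (c n) \<in> Fil k"
    by metis
  have "(\<Sum>n\<in>S. y n) - exp_sum \<theta> k x = (\<Sum>n\<in>S. y n - exp_sum \<theta> k (c n))" for k
    unfolding c(3) vsp.linear_sum[OF linear_exp_sum[OF \<theta>]] by (rule sum_subtractf[symmetric])
  then have "(\<Sum>n\<in>S. y n) - exp_sum \<theta> k x \<in> Fil k" for k
    using Fil_sum[of S "\<lambda>n. y n - exp_sum \<theta> k (c n)"] y by simp
  moreover have "filt_exp scale F \<theta> x = filt_Lim UNIV F (\<lambda>k. exp_sum \<theta> k x)"
    by (simp add: filt_exp_def exp_sum_def)
  ultimately show ?thesis
    using filt_Lim_UNIV_eqI by metis
qed

lemma filt_exp_eqI:
  assumes \<theta>: "raising_derivation \<theta>" and y: "\<And>k. y - exp_sum \<theta> k x \<in> Fil k"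
  shows "filt_exp scale F \<theta> x = y"
proof (rule eq_if_diff_in_Fil)
  fix j
  have "filt_exp scale F \<theta> x - y = (filt_exp scale F \<theta> x - exp_sum \<theta> j x) - (y - exp_sum \<theta> j x)"
    by simp
  also have "\<dots> \<in> Fil j"
    by (intro Fil_diff filt_exp_approx[OF \<theta>] y)
  finally show "filt_exp scale F \<theta> x - y \<in> Fil j" .
qed

lemma filt_exp_Lg:
  assumes \<theta>: "raising_derivation \<theta>" and x: "x \<in> Lg m"
  shows "filt_exp scale F \<theta> x \<in> Lg m"
proof -
  obtain y where "y \<in> Lg m" "\<And>k. y - exp_sum \<theta> k x \<in> Fil k"
    using Lg_Cauchy_limit[OF exp_sum_Lg[OF \<theta> x] exp_sum_Cauchy[OF \<theta>]] by blast
  then show ?thesis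
    using filt_exp_eqI[OF \<theta>] by metis
qed

lemma filt_exp_Fil:
  assumes \<theta>: "raising_derivation \<theta>" and x: "x \<in> Fil j"
  shows "filt_exp scale F \<theta> x \<in> Fil j"
proof -
  have "filt_exp scale F \<theta> x = (filt_exp scale F \<theta> x - exp_sum \<theta> j x) + exp_sum \<theta> j x"
    by simp
  also have "\<dots> \<in> Fil j"
    by (intro Fil_add filt_exp_approx[OF \<theta>] exp_sum_Fil[OF \<theta> x])
  finally show ?thesis .
qed

lemma linear_filt_exp:
  assumes \<theta>: "raising_derivation \<theta>"
  shows "linear_map (filt_exp scale F \<theta>)"
proof -
  let ?e = "filt_exp scale F \<theta>" and ?s = "exp_sum \<theta>"
  have lin: "linear_map (?s k)" for k
    using linear_exp_sum[OF \<theta>] .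
  have "?e (x + y) = ?e x + ?e y" for x y
  proof (rule eq_if_diff_in_Fil)
    fix j
    have "?e (x + y) - (?e x + ?e y) =
        (?e (x + y) - ?s j (x + y)) - ((?e x - ?s j x) + (?e y - ?s j y))"
      by (simp add: vsp.linear_add[OF lin] algebra_simps)
    also have "\<dots> \<in> Fil j"
      by (intro Fil_diff Fil_add filt_exp_approx[OF \<theta>])
    finally show "?e (x + y) - (?e x + ?e y) \<in> Fil j" .
  qed
  moreover have "?e (scale c x) = scale c (?e x)" for c x
  proof (rule eq_if_diff_in_Fil)
    fix j
    have "?e (scale c x) - scale c (?e x) = (?e (scale c x) - ?s j (scale c x)) - scale c (?e x - ?s j x)"
      by (simp add: vsp.linear_scale[OF lin] vs.scale_right_diff_distrib)
    also have "\<dots> \<in> Fil j"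
      by (intro Fil_diff Fil_scale filt_exp_approx[OF \<theta>])
    finally show "?e (scale c x) - scale c (?e x) \<in> Fil j" .
  qed
  ultimately show ?thesis
    by (simp add: Vector_Spaces.linear_iff vs.vector_space_axioms)
qed

text \<open>The square k, j < N and the triangle k + j < N differ only by terms of order at least N.\<close>
lemma exp_Cauchy_product_approx:
  assumes T: "\<And>k j. T k j \<in> Fil (k + j)"
  shows "(\<Sum>k<N. \<Sum>j<N. scale (1 / fact k) (scale (1 / fact j) (T k j))) -
     (\<Sum>n<N. scale (1 / fact n) (\<Sum>k\<le>n. scale (of_nat (n choose k)) (T k (n - k)))) \<in> Fil N"
proof -
  let ?g = "\<lambda>k j. scale (1 / fact k) (scale (1 / fact j) (T k j))"
  let ?A = "{..<N} \<times> {..<N}" and ?B = "{(k, j). k + j < N}"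
  have coeff: "scale (1 / fact n) (scale (of_nat (n choose k)) v) =
      scale (1 / fact k) (scale (1 / fact (n - k)) v)" if "k \<le> n" for n k v
  proof -
    have "1 / fact n * (of_nat (n choose k) :: rat) = 1 / fact k * (1 / fact (n - k))"
      using binomial_fact[OF that, where 'a = rat] by (simp add: field_simps)
    then show ?thesis
      by (simp add: vs.scale_scale)
  qed
  have "(\<Sum>n<N. scale (1 / fact n) (\<Sum>k\<le>n. scale (of_nat (n choose k)) (T k (n - k)))) =
      (\<Sum>n<N. \<Sum>k\<le>n. ?g k (n - k))"
    unfolding vs.scale_sum_right by (intro sum.cong refl coeff) simp
  also have "\<dots> = (\<Sum>(k, j)\<in>?B. ?g k j)"
    by (rule sum.triangle_reindex[symmetric])
  finally have triangle: "(\<Sum>n<N. scale (1 / fact n) (\<Sum>k\<le>n. scale (of_nat (n choose k)) (T k (n - k)))) =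
      (\<Sum>(k, j)\<in>?B. ?g k j)" .
  have "(\<Sum>k<N. \<Sum>j<N. ?g k j) = (\<Sum>(k, j)\<in>?A - ?B. ?g k j) + (\<Sum>(k, j)\<in>?B. ?g k j)"
    by (simp add: sum.cartesian_product sum.subset_diff[of ?B ?A] subset_iff)
  moreover have "(\<Sum>(k, j)\<in>?A - ?B. ?g k j) \<in> Fil N"
    using Fil_mono_member[OF T] by (intro Fil_sum) (auto intro: Fil_scale)
  ultimately show ?thesis
    unfolding triangle by simp
qed

lemma filt_exp_br:
  assumes \<theta>: "raising_derivation \<theta>"
  shows "filt_exp scale F \<theta> (br x y) = br (filt_exp scale F \<theta> x) (filt_exp scale F \<theta> y)"
proof (rule eq_if_diff_in_Fil)
  fix N
  let ?e = "filt_exp scale F \<theta>" and ?s = "exp_sum \<theta> N"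
  let ?T = "\<lambda>k j. br ((\<theta> ^^ k) x) ((\<theta> ^^ j) y)"
  have T: "?T k j \<in> Fil (k + j)" for k j
    using br_Fil[OF funpow_Fil[OF \<theta>, of x 0 k] funpow_Fil[OF \<theta>, of y 0 j]] by simp
  have "?s (br x y) = (\<Sum>n<N. scale (1 / fact n) (\<Sum>k\<le>n. scale (of_nat (n choose k)) (?T k (n - k))))"
    unfolding exp_sum_def funpow_br[OF \<theta>] ..
  moreover have "br (?s x) (?s y) =
      (\<Sum>k<N. \<Sum>j<N. scale (1 / fact k) (scale (1 / fact j) (?T k j)))"
    unfolding exp_sum_def
    by (simp add: vsp.linear_sum[OF linear_br_left] vsp.linear_scale[OF linear_br_left]
        vsp.linear_sum[OF linear_br_right] vsp.linear_scale[OF linear_br_right] vs.scale_sum_right)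
      (subst sum.swap, simp add: ac_simps)
  ultimately have product: "br (?s x) (?s y) - ?s (br x y) \<in> Fil N"
    using exp_Cauchy_product_approx[OF T] by simp
  have "br (?e x) (?e y) - br (?s x) (?s y) = br (?e x - ?s x) (?e y) + br (?s x) (?e y - ?s y)"
    by (simp add: vsp.linear_diff[OF linear_br_left] vsp.linear_diff[OF linear_br_right])
  also have "\<dots> \<in> Fil N"
    by (intro Fil_add br_Fil_left br_Fil_right filt_exp_approx[OF \<theta>])
  finally have tails: "br (?e x) (?e y) - br (?s x) (?s y) \<in> Fil N" .
  have "?e (br x y) - br (?e x) (?e y) = (?e (br x y) - ?s (br x y)) -
      (br (?s x) (?s y) - ?s (br x y)) - (br (?e x) (?e y) - br (?s x) (?s y))"
    by (simp add: algebra_simps)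
  also have "\<dots> \<in> Fil N"
    by (intro Fil_diff filt_exp_approx[OF \<theta>] product tails)
  finally show "?e (br x y) - br (?e x) (?e y) \<in> Fil N" .
qed

definition ad :: "('a \<Rightarrow> 'a) \<Rightarrow> ('a \<Rightarrow> 'a) \<Rightarrow> 'a \<Rightarrow> 'a" where
  "ad \<theta> \<phi> y = \<theta> (\<phi> y) - \<phi> (\<theta> y)"

lemma funpow_ad_Suc: "(ad \<theta> ^^ Suc n) \<phi> y = \<theta> ((ad \<theta> ^^ n) \<phi> y) - (ad \<theta> ^^ n) \<phi> (\<theta> y)"
  by (simp only: funpow.simps comp_apply ad_def)

lemma funpow_ad_add:
  "linear_map \<theta> \<Longrightarrow> (ad \<theta> ^^ n) (\<lambda>y. f y + g y) = (\<lambda>y. (ad \<theta> ^^ n) f y + (ad \<theta> ^^ n) g y)"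
  by (induction n) (simp_all add: fun_eq_iff funpow_ad_Suc vsp.linear_add del: funpow.simps)

lemma funpow_ad_uminus:
  "linear_map \<theta> \<Longrightarrow> (ad \<theta> ^^ n) (\<lambda>y. - f y) = (\<lambda>y. - (ad \<theta> ^^ n) f y)"
  by (induction n) (simp_all add: fun_eq_iff funpow_ad_Suc vsp.linear_neg del: funpow.simps)

lemma funpow_ad_ident: "linear_map \<theta> \<Longrightarrow> (ad \<theta> ^^ Suc n) (\<lambda>x. x) = (\<lambda>_. 0)"
  by (induction n) (simp_all add: fun_eq_iff ad_def vsp.linear_0)

lemma funpow_ad_Fil:
  assumes \<theta>: "raising_derivation \<theta>" and \<phi>: "\<And>j x. x \<in> Fil j \<Longrightarrow> \<phi> x \<in> Fil j"
  shows "z \<in> Fil j \<Longrightarrow> (ad \<theta> ^^ n) \<phi> z \<in> Fil (j + n)"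
proof (induction n arbitrary: z j)
  case (Suc n)
  have "\<theta> ((ad \<theta> ^^ n) \<phi> z) \<in> Fil (j + Suc n)"
    using raising_derivationD(4)[OF \<theta> Suc.IH[OF Suc.prems]] by simp
  moreover have "(ad \<theta> ^^ n) \<phi> (\<theta> z) \<in> Fil (j + Suc n)"
    using Suc.IH[OF raising_derivationD(4)[OF \<theta> Suc.prems]] by simp
  ultimately show ?case
    unfolding funpow_ad_Suc by (rule Fil_diff)
qed (use \<phi> in simp)

text \<open>Binomial expansion of ad_\<theta>^n = (L_\<theta> - R_\<theta>)^n, where left and right composition
  with \<theta> commute.\<close>
lemma funpow_ad_expansion:
  assumes \<theta>: "raising_derivation \<theta>" and \<phi>: "linear_map \<phi>"
  shows "(ad \<theta> ^^ n) \<phi> z =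
    (\<Sum>k\<le>n. scale (of_nat (n choose k)) ((\<theta> ^^ k) (\<phi> (((\<lambda>x. - \<theta> x) ^^ (n - k)) z))))"
proof (induction n arbitrary: z)
  case (Suc n)
  let ?T = "\<lambda>k j. (\<theta> ^^ k) (\<phi> (((\<lambda>x. - \<theta> x) ^^ j) z))"
  have lin: "linear_map \<theta>"
    using raising_derivationD(1)[OF \<theta>] .
  have right: "- (\<theta> ^^ k) (\<phi> (((\<lambda>x. - \<theta> x) ^^ m) (\<theta> z))) = ?T k (Suc m)" for k m
  proof -
    have "((\<lambda>x. - \<theta> x) ^^ Suc m) z = - ((\<lambda>x. - \<theta> x) ^^ m) (\<theta> z)"
      using vsp.linear_neg[OF linear_funpow_raising[OF raising_derivation_uminus[OF \<theta>]]]
      by (simp add: funpow_Suc_right del: funpow.simps)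
    then show ?thesis
      by (simp add: vsp.linear_neg[OF \<phi>] vsp.linear_neg[OF linear_funpow_raising[OF \<theta>]])
  qed
  have "(ad \<theta> ^^ Suc n) \<phi> z = \<theta> ((ad \<theta> ^^ n) \<phi> z) + - (ad \<theta> ^^ n) \<phi> (\<theta> z)"
    unfolding funpow_ad_Suc by simp
  also have "\<dots> = (\<Sum>k\<le>n. scale (of_nat (n choose k)) (?T (Suc k) (n - k))) +
      (\<Sum>k\<le>n. scale (of_nat (n choose k)) (?T k (Suc (n - k))))"
    unfolding Suc
    by (simp add: vsp.linear_sum[OF lin] vsp.linear_scale[OF lin] sum_negf right[symmetric]
        funpow.simps(2)[where f = \<theta>] del: funpow.simps)
  also have "\<dots> = (\<Sum>k\<le>Suc n. scale (of_nat (Suc n choose k)) (?T k (Suc n - k)))"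
    by (rule sum_choose_Suc[symmetric])
  finally show ?case .
qed simp

lemma filt_exp_conjugate_approx:
  assumes \<theta>: "raising_derivation \<theta>" and \<phi>: "linear_map \<phi>"
    and \<phi>_Fil: "\<And>j x. x \<in> Fil j \<Longrightarrow> \<phi> x \<in> Fil j"
  shows "filt_exp scale F \<theta> (\<phi> (filt_exp scale F (\<lambda>x. - \<theta> x) z)) -
     (\<Sum>n<N. scale (1 / fact n) ((ad \<theta> ^^ n) \<phi> z)) \<in> Fil N"
proof -
  let ?e = "filt_exp scale F \<theta>" and ?e' = "filt_exp scale F (\<lambda>x. - \<theta> x)"
  let ?s = "exp_sum \<theta> N" and ?s' = "exp_sum (\<lambda>x. - \<theta> x) N"
  let ?T = "\<lambda>k j. (\<theta> ^^ k) (\<phi> (((\<lambda>x. - \<theta> x) ^^ j) z))"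
  have \<theta>': "raising_derivation (\<lambda>x. - \<theta> x)"
    using raising_derivation_uminus[OF \<theta>] .
  have T: "?T k j \<in> Fil (k + j)" for k j
    using funpow_Fil[OF \<theta> \<phi>_Fil[OF funpow_Fil[OF \<theta>', of z 0 j]], of k] by (simp add: add.commute)
  have "?e (\<phi> (?e' z)) - ?e (\<phi> (?s' z)) = ?e (\<phi> (?e' z - ?s' z))"
    by (simp add: vsp.linear_diff[OF linear_filt_exp[OF \<theta>]] vsp.linear_diff[OF \<phi>])
  then have "?e (\<phi> (?e' z)) - ?e (\<phi> (?s' z)) \<in> Fil N"
    by (simp add: filt_exp_Fil[OF \<theta>] \<phi>_Fil filt_exp_approx[OF \<theta>'])
  then have truncate: "?e (\<phi> (?e' z)) - ?s (\<phi> (?s' z)) \<in> Fil N"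
    using Fil_add[OF _ filt_exp_approx[OF \<theta>, of "\<phi> (?s' z)" N]] by force
  have "?s (\<phi> (?s' z)) = (\<Sum>k<N. \<Sum>j<N. scale (1 / fact k) (scale (1 / fact j) (?T k j)))"
    unfolding exp_sum_def
    by (simp add: vsp.linear_sum[OF \<phi>] vsp.linear_scale[OF \<phi>] vs.scale_sum_right
        vsp.linear_sum[OF linear_funpow_raising[OF \<theta>]] vsp.linear_scale[OF linear_funpow_raising[OF \<theta>]]
        del: funpow.simps)
  moreover have "(\<Sum>n<N. scale (1 / fact n) ((ad \<theta> ^^ n) \<phi> z)) =
      (\<Sum>n<N. scale (1 / fact n) (\<Sum>k\<le>n. scale (of_nat (n choose k)) (?T k (n - k))))"
    unfolding funpow_ad_expansion[OF \<theta> \<phi>] ..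
  ultimately have "?s (\<phi> (?s' z)) - (\<Sum>n<N. scale (1 / fact n) ((ad \<theta> ^^ n) \<phi> z)) \<in> Fil N"
    using exp_Cauchy_product_approx[OF T] by simp
  then show ?thesis
    using Fil_add[OF truncate] by force
qed

lemma filt_exp_uminus_inverse:
  assumes \<theta>: "raising_derivation \<theta>"
  shows "filt_exp scale F \<theta> (filt_exp scale F (\<lambda>x. - \<theta> x) z) = z"
proof (rule eq_if_diff_in_Fil)
  fix N
  have "(\<Sum>n<Suc N. scale (1 / fact n) ((ad \<theta> ^^ n) (\<lambda>x. x) z)) = z"
    unfolding sum.lessThan_Suc_shift using funpow_ad_ident[OF raising_derivationD(1)[OF \<theta>]] by simp
  then show "filt_exp scale F \<theta> (filt_exp scale F (\<lambda>x. - \<theta> x) z) - z \<in> Fil N"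
    using filt_exp_conjugate_approx[OF \<theta> vs.linear_ident, of z "Suc N"] Fil_mono_member by force
qed

lemma bij_filt_exp:
  assumes \<theta>: "raising_derivation \<theta>"
  shows "bij (filt_exp scale F \<theta>)"
proof (rule o_bij)
  show "filt_exp scale F \<theta> \<circ> filt_exp scale F (\<lambda>x. - \<theta> x) = id"
    using filt_exp_uminus_inverse[OF \<theta>] by auto
  show "filt_exp scale F (\<lambda>x. - \<theta> x) \<circ> filt_exp scale F \<theta> = id"
    using filt_exp_uminus_inverse[OF raising_derivation_uminus[OF \<theta>]] by auto
qed

end

locale complete_sub_dgl_of_Der = complete_dgl +
  fixes Mg :: "int \<Rightarrow> ('a \<Rightarrow> 'a) set"
    and MF :: "nat \<Rightarrow> ('a \<Rightarrow> 'a) set"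
  assumes Mg_derivation: "\<theta> \<in> Mg k \<Longrightarrow> derivation scale Lg br k \<theta>"
    and Mg_zero: "(\<lambda>_. 0) \<in> Mg k"
    and Mg_add: "\<theta> \<in> Mg k \<Longrightarrow> \<eta> \<in> Mg k \<Longrightarrow> (\<lambda>x. \<theta> x + \<eta> x) \<in> Mg k"
    and Mg_scale: "\<theta> \<in> Mg k \<Longrightarrow> (\<lambda>x. scale c (\<theta> x)) \<in> Mg k"
    and Mg_der_br: "\<theta> \<in> Mg k \<Longrightarrow> \<eta> \<in> Mg l \<Longrightarrow> der_br scale k l \<theta> \<eta> \<in> Mg (k + l)"
    and Mg_der_D: "\<theta> \<in> Mg k \<Longrightarrow> der_D scale d k \<theta> \<in> Mg (k - 1)"
    and Mg_subset_MF_1: "Mg k \<subseteq> MF 1"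
    and MF_Suc_subset: "n \<ge> 1 \<Longrightarrow> MF (Suc n) \<subseteq> MF n"
    and MF_zero: "n \<ge> 1 \<Longrightarrow> (\<lambda>_. 0) \<in> MF n"
    and MF_add: "n \<ge> 1 \<Longrightarrow> \<theta> \<in> Mg k \<Longrightarrow> \<theta> \<in> MF n \<Longrightarrow> \<eta> \<in> Mg k \<Longrightarrow> \<eta> \<in> MF n \<Longrightarrow>
      (\<lambda>x. \<theta> x + \<eta> x) \<in> MF n"
    and MF_scale: "n \<ge> 1 \<Longrightarrow> \<theta> \<in> Mg k \<Longrightarrow> \<theta> \<in> MF n \<Longrightarrow> (\<lambda>x. scale c (\<theta> x)) \<in> MF n"
    and MF_der_br: "p \<ge> 1 \<Longrightarrow> q \<ge> 1 \<Longrightarrow> \<theta> \<in> Mg k \<Longrightarrow> \<theta> \<in> MF p \<Longrightarrow> \<eta> \<in> Mg l \<Longrightarrow> \<eta> \<in> MF q \<Longrightarrow>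
      der_br scale k l \<theta> \<eta> \<in> MF (p + q)"
    and Mg_complete: "filt_complete (Mg k) MF (\<lambda>_. 0)"
    and MF_F: "p \<ge> 1 \<Longrightarrow> q \<ge> 1 \<Longrightarrow> \<theta> \<in> Mg k \<Longrightarrow> \<theta> \<in> MF p \<Longrightarrow> x \<in> F q \<Longrightarrow> \<theta> x \<in> F (p + q)"

lemma complete_sub_dgl_of_Der_if_complete_sub_dgl:
  assumes "cdgl scale Lg br d F" and "complete_sub_dgl scale Lg br d F Mg MF"
  shows "complete_sub_dgl_of_Der scale Lg br d F Mg MF"
  by (intro complete_sub_dgl_of_Der.intro complete_dgl_if_cdgl[OF assms(1)]
      complete_sub_dgl_of_Der_axioms.intro)
    (use assms(2) in \<open>simp_all add: complete_sub_dgl_def Ball_def\<close>)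

context complete_sub_dgl_of_Der
begin

lemma Mg_neg: "\<theta> \<in> Mg k \<Longrightarrow> (\<lambda>x. - \<theta> x) \<in> Mg k"
  using Mg_scale[of \<theta> k "-1"] by simp

lemma Mg_diff: "\<theta> \<in> Mg k \<Longrightarrow> \<eta> \<in> Mg k \<Longrightarrow> \<theta> - \<eta> \<in> Mg k"
  using Mg_add[OF _ Mg_neg, of \<theta> k \<eta>] by (simp add: fun_diff_def)

lemma Mg_sum: "(\<And>i. i \<in> A \<Longrightarrow> f i \<in> Mg k) \<Longrightarrow> (\<lambda>x. \<Sum>i\<in>A. f i x) \<in> Mg k"
  by (induction A rule: infinite_finite_induct) (simp_all add: Mg_zero Mg_add)

lemma linear_Mg: "\<theta> \<in> Mg k \<Longrightarrow> linear_map \<theta>"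
  using Mg_derivation by (simp add: derivation_def)

definition MFil :: "nat \<Rightarrow> ('a \<Rightarrow> 'a) set" where
  "MFil j = MF (Suc j)"

lemma Mg_MFil_0: "\<theta> \<in> Mg k \<Longrightarrow> \<theta> \<in> MFil 0"
  using Mg_subset_MF_1 by (auto simp: MFil_def)

lemma MFil_Suc_subset: "MFil (Suc j) \<subseteq> MFil j"
  by (simp add: MFil_def MF_Suc_subset)

lemma MFil_antimono: "j \<le> k \<Longrightarrow> MFil k \<subseteq> MFil j"
  by (induction k rule: dec_induct) (use MFil_Suc_subset in auto)

lemma MFil_mono_member: "\<theta> \<in> MFil k \<Longrightarrow> j \<le> k \<Longrightarrow> \<theta> \<in> MFil j"
  using MFil_antimono by blast

lemma MFil_zero: "(\<lambda>_. 0) \<in> MFil j"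
  by (simp add: MFil_def MF_zero)

lemma MFil_add: "\<theta> \<in> Mg k \<Longrightarrow> \<theta> \<in> MFil j \<Longrightarrow> \<eta> \<in> Mg k \<Longrightarrow> \<eta> \<in> MFil j \<Longrightarrow> (\<lambda>x. \<theta> x + \<eta> x) \<in> MFil j"
  unfolding MFil_def by (rule MF_add) auto

lemma MFil_scale: "\<theta> \<in> Mg k \<Longrightarrow> \<theta> \<in> MFil j \<Longrightarrow> (\<lambda>x. scale c (\<theta> x)) \<in> MFil j"
  unfolding MFil_def by (rule MF_scale) auto

lemma MFil_neg: "\<theta> \<in> Mg k \<Longrightarrow> \<theta> \<in> MFil j \<Longrightarrow> (\<lambda>x. - \<theta> x) \<in> MFil j"
  using MFil_scale[of \<theta> k j "-1"] by simp

lemma MFil_diff: "\<theta> \<in> Mg k \<Longrightarrow> \<theta> \<in> MFil j \<Longrightarrow> \<eta> \<in> Mg k \<Longrightarrow> \<eta> \<in> MFil j \<Longrightarrow> \<theta> - \<eta> \<in> MFil j"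
  using MFil_add[OF _ _ Mg_neg MFil_neg, of \<theta> k j \<eta>] by (simp add: fun_diff_def)

lemma der_br_MFil:
  "\<theta> \<in> Mg k \<Longrightarrow> \<eta> \<in> Mg l \<Longrightarrow> \<eta> \<in> MFil j \<Longrightarrow> der_br scale k l \<theta> \<eta> \<in> MFil (Suc j)"
  using MF_der_br[of 1 "Suc j" \<theta> k \<eta> l] Mg_subset_MF_1 by (auto simp: MFil_def)

lemma MFil_apply_Fil: "\<theta> \<in> Mg k \<Longrightarrow> \<theta> \<in> MFil j \<Longrightarrow> \<theta> x \<in> Fil j"
  using MF_F[of "Suc j" 1 \<theta> k x] F_1 Fil_mono_member[of _ "Suc j" j] by (simp add: MFil_def Fil_def)

lemma Mg_apply_Fil: "\<theta> \<in> Mg k \<Longrightarrow> x \<in> Fil j \<Longrightarrow> \<theta> x \<in> Fil (Suc j)"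
  using MF_F[of 1 "Suc j" \<theta> k x] Mg_subset_MF_1 by (auto simp: Fil_def)

text \<open>The Leibniz rule in derivation is only required for homogeneous x; it extends to all of L
  through the graded decomposition.\<close>
lemma raising_derivation_Mg_0:
  assumes \<theta>: "\<theta> \<in> Mg 0"
  shows "raising_derivation \<theta>"
proof -
  have der: "derivation scale Lg br 0 \<theta>"
    using Mg_derivation[OF \<theta>] .
  have lin: "linear_map \<theta>"
    using linear_Mg[OF \<theta>] .
  have "\<theta> (br x y) = br (\<theta> x) y + br x (\<theta> y)" for x y
  proof -
    obtain c S where c: "\<forall>n. c n \<in> Lg n" "x = sum c S"
      using graded_decomposition by blast
    have homogeneous: "\<theta> (br u y) = br (\<theta> u) y + br u (\<theta> y)" if "u \<in> Lg p" for u p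
      using der that unfolding derivation_def by (simp add: gsgn_def)
    have "\<theta> (br (c n) y) = br (\<theta> (c n)) y + br (c n) (\<theta> y)" for n
      using homogeneous c(1) by blast
    then show ?thesis
      by (simp add: c(2) vsp.linear_sum[OF linear_br_left] vsp.linear_sum[OF lin] sum.distrib)
  qed
  moreover have "x \<in> Lg n \<Longrightarrow> \<theta> x \<in> Lg n" for x n
    using der by (force simp: derivation_def)
  ultimately show ?thesis
    unfolding raising_derivation_def using lin Mg_apply_Fil[OF \<theta>] by blast
qed

lemma Mg_Cauchy_limit:
  assumes s: "\<And>m. s m \<in> Mg k" and Cauchy: "\<And>j m. j \<le> m \<Longrightarrow> s m - s j \<in> MFil j"
  shows "\<exists>y\<in>Mg k. \<forall>j. y - s j \<in> MFil j"
proof -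
  have "\<forall>n m. 1 \<le> n \<longrightarrow> n \<le> m \<longrightarrow> s m - s n \<in> MF n"
  proof (intro allI impI)
    fix n m :: nat
    assume "1 \<le> n" "n \<le> m"
    then show "s m - s n \<in> MF n"
      using Cauchy[of n m] MF_Suc_subset[of n] by (auto simp: MFil_def)
  qed
  then obtain y where y: "y \<in> Mg k" "\<And>n. n \<ge> 1 \<Longrightarrow> y - s n \<in> MF n"
    using Mg_complete[of k] s unfolding filt_complete_def by blast
  have "y - s j \<in> MFil j" for j
  proof -
    have "y - s (Suc j) \<in> MFil j"
      using y(2)[of "Suc j"] by (simp add: MFil_def)
    moreover have "s (Suc j) - s j \<in> MFil j"
      using Cauchy by simp
    moreover have "y - s j = (\<lambda>x. (y - s (Suc j)) x + (s (Suc j) - s j) x)"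
      by (simp add: fun_eq_iff)
    ultimately show ?thesis
      using MFil_add[OF Mg_diff[OF y(1) s] _ Mg_diff[OF s s]] by metis
  qed
  then show ?thesis
    using y(1) by blast
qed

lemma filt_Lim_Mg_eqI:
  assumes s: "\<And>m. s m \<in> Mg k" and y: "y \<in> Mg k" and y_s: "\<And>j. y - s j \<in> MFil j"
  shows "filt_Lim (Mg k) MF s = y"
proof -
  have s_y: "s m - y \<in> MFil j" if "j \<le> m" for j m
  proof -
    have "(\<lambda>x. - (y - s m) x) \<in> MFil m"
      using MFil_neg[OF Mg_diff[OF y s] y_s] .
    then show ?thesis
      using MFil_mono_member[OF _ that] by (simp add: fun_diff_def)
  qed
  have "filt_lim (Mg k) MF s y"
    unfolding filt_lim_def
  proof (intro conjI allI impI exI)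
    fix n m :: nat
    assume "1 \<le> n" "n \<le> m"
    then show "s m - y \<in> MF n"
      using s_y[of "n - 1" m] by (simp add: MFil_def)
  qed (rule y)
  moreover have "y' = y" if lim': "filt_lim (Mg k) MF s y'" for y'
  proof -
    have y': "y' \<in> Mg k"
      using lim' by (simp add: filt_lim_def)
    have "y - y' \<in> MF n" if "n \<ge> 1" for n
    proof -
      obtain N where N: "\<forall>m\<ge>N. s m - y' \<in> MFil (n - 1)"
        using lim'[unfolded filt_lim_def, THEN conjunct2, rule_format, OF \<open>n \<ge> 1\<close>] \<open>n \<ge> 1\<close>
        by (auto simp: MFil_def)
      have "y - y' = (s (max N n) - y') - (s (max N n) - y)"
        by (simp add: fun_eq_iff)
      also have "\<dots> \<in> MFil (n - 1)"
        using MFil_diff[OF Mg_diff[OF s y'] _ Mg_diff[OF s y]] N s_y[of "n - 1" "max N n"] by simp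
      finally show ?thesis
        using \<open>n \<ge> 1\<close> by (simp add: MFil_def)
    qed
    then have "y - y' = (\<lambda>_. 0)"
      using Mg_complete[of k] Mg_diff[OF y y'] unfolding filt_complete_def by blast
    then show ?thesis
      by (simp add: fun_eq_iff)
  qed
  ultimately show ?thesis
    unfolding filt_Lim_def by (rule the_equality)
qed

lemma Mg_series_approx:
  assumes a: "\<And>i. a i \<in> Mg k" "\<And>i. a i \<in> MFil i"
  shows "filt_Lim (Mg k) MF (\<lambda>m y. \<Sum>i<m. scale (c i) (a i y)) z - (\<Sum>i<j. scale (c i) (a i z)) \<in> Fil j"
proof -
  let ?s = "\<lambda>m y. \<Sum>i<m. scale (c i) (a i y)"
  have summand: "(\<lambda>y. scale (c i) (a i y)) \<in> Mg k" for i
    using Mg_scale a(1) by blast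
  have s: "?s m \<in> Mg k" for m
    using Mg_sum[of "{..<m}" "\<lambda>i y. scale (c i) (a i y)"] summand by simp
  have Cauchy: "?s m - ?s j \<in> MFil j" if "j \<le> m" for j m
    using that
  proof (induction m rule: dec_induct)
    case (step m)
    have "?s (Suc m) - ?s j = (\<lambda>y. (?s m - ?s j) y + scale (c m) (a m y))"
      by (simp add: fun_eq_iff)
    also have "\<dots> \<in> MFil j"
      using MFil_scale[OF a(1) MFil_mono_member[OF a(2) step(1)]]
      by (rule MFil_add[OF Mg_diff[OF s s] step(3) summand])
    finally show ?case .
  qed (simp add: fun_diff_def MFil_zero)
  obtain y where y: "y \<in> Mg k" "\<And>j. y - ?s j \<in> MFil j"
    using Mg_Cauchy_limit[OF s Cauchy] by blast
  have "(y - ?s j) z \<in> Fil j"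
    by (rule MFil_apply_Fil[OF Mg_diff[OF y(1) s] y(2)])
  then show ?thesis
    using filt_Lim_Mg_eqI[OF s y] by simp
qed

lemma der_br_eq_ad: "der_br scale 0 l \<theta> = ad \<theta>"
  by (simp add: fun_eq_iff der_br_def ad_def gsgn_def)

lemma der_D_eq_ad: "der_D scale d 0 \<theta> = (\<lambda>y. - ad \<theta> d y)"
  by (simp add: fun_eq_iff der_D_def ad_def gsgn_def)

lemma funpow_ad_der_D:
  "linear_map \<theta> \<Longrightarrow> (ad \<theta> ^^ i) (der_D scale d 0 \<theta>) = (\<lambda>y. - (ad \<theta> ^^ Suc i) d y)"
  unfolding der_D_eq_ad funpow_ad_uminus by (simp add: funpow_Suc_right del: funpow.simps)

lemma funpow_ad_Mg:
  assumes \<theta>: "\<theta> \<in> Mg 0" and b: "b \<in> Mg l"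
  shows "(ad \<theta> ^^ i) b \<in> Mg l" "(ad \<theta> ^^ i) b \<in> MFil i"
proof -
  have "(ad \<theta> ^^ i) b \<in> Mg l \<and> (ad \<theta> ^^ i) b \<in> MFil i"
  proof (induction i)
    case 0
    show ?case
      using b Mg_MFil_0[OF b] by simp
  next
    case (Suc i)
    then show ?case
      using Mg_der_br[OF \<theta>, of _ l] der_br_MFil[OF \<theta>, of _ l] by (simp add: der_br_eq_ad)
  qed
  then show "(ad \<theta> ^^ i) b \<in> Mg l" "(ad \<theta> ^^ i) b \<in> MFil i"
    by blast+
qed

text \<open>The two series defining the gauge action are \<Sum> ad_\<theta>^i \<delta> / i! and
  \<Sum> ad_\<theta>^i (D\<theta>) / (i+1)!; since D\<theta> = - ad_\<theta> d, their difference is e^(ad \<theta>) (d + \<delta>) - d.\<close>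
lemma gauge_approx:
  assumes \<theta>: "\<theta> \<in> Mg 0" and \<delta>: "\<delta> \<in> Mg (-1)"
  shows "gauge scale d Mg MF \<theta> \<delta> z -
    ((\<Sum>n<N. scale (1 / fact n) ((ad \<theta> ^^ n) (\<lambda>y. d y + \<delta> y) z)) - d z) \<in> Fil N"
proof -
  have lin: "linear_map \<theta>"
    using linear_Mg[OF \<theta>] .
  define S1 where "S1 = filt_Lim (Mg (-1)) MF (\<lambda>k y. \<Sum>i<k. scale (1 / fact i) ((ad \<theta> ^^ i) \<delta> y))"
  define S2 where "S2 = filt_Lim (Mg (-1)) MF
    (\<lambda>k y. \<Sum>i<k. scale (1 / fact (Suc i)) ((ad \<theta> ^^ i) (der_D scale d 0 \<theta>) y))"
  define P where "P = (\<Sum>i<N. scale (1 / fact i) ((ad \<theta> ^^ i) \<delta> z))"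
  define Q where "Q = (\<Sum>i<N. scale (1 / fact (Suc i)) ((ad \<theta> ^^ Suc i) d z))"
  define R where "R = scale (1 / fact N) ((ad \<theta> ^^ N) d z)"
  have gauge: "gauge scale d Mg MF \<theta> \<delta> z = S1 z - S2 z"
    by (simp add: gauge_def Let_def der_br_eq_ad S1_def S2_def)
  have S1: "S1 z - P \<in> Fil N"
    unfolding S1_def P_def by (rule Mg_series_approx) (rule funpow_ad_Mg[OF \<theta> \<delta>])+
  have "(\<Sum>i<N. scale (1 / fact (Suc i)) ((ad \<theta> ^^ i) (der_D scale d 0 \<theta>) z)) = - Q"
    unfolding Q_def funpow_ad_der_D[OF lin] by (simp add: sum_negf del: funpow.simps)
  moreover have "S2 z - (\<Sum>i<N. scale (1 / fact (Suc i)) ((ad \<theta> ^^ i) (der_D scale d 0 \<theta>) z)) \<in> Fil N"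
    unfolding S2_def by (rule Mg_series_approx) (rule funpow_ad_Mg[OF \<theta> Mg_der_D[OF \<theta>, simplified]])+
  ultimately have S2: "S2 z + Q \<in> Fil N"
    by simp
  have R: "R \<in> Fil N"
    using funpow_ad_Fil[OF raising_derivation_Mg_0[OF \<theta>] d_Fil, where z = z and j = 0 and n = N]
    unfolding R_def by (simp add: Fil_scale)
  have sum: "(\<Sum>n<N. scale (1 / fact n) ((ad \<theta> ^^ n) (\<lambda>y. d y + \<delta> y) z)) = P + (d z + Q - R)"
  proof -
    have "(\<Sum>n<Suc N. scale (1 / fact n) ((ad \<theta> ^^ n) d z)) = d z + Q"
      unfolding sum.lessThan_Suc_shift Q_def by simp
    then show ?thesis
      unfolding funpow_ad_add[OF lin] P_def R_def
      by (simp add: vs.scale_right_distrib sum.distrib algebra_simps)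
  qed
  have "gauge scale d Mg MF \<theta> \<delta> z - (P + (d z + Q - R) - d z) = (S1 z - P) - (S2 z + Q) + R"
    unfolding gauge by (simp add: algebra_simps)
  also have "\<dots> \<in> Fil N"
    by (intro Fil_add Fil_diff S1 S2 R)
  finally show ?thesis
    unfolding sum .
qed

lemma filt_exp_conjugate_eq_gauge:
  assumes \<theta>: "\<theta> \<in> Mg 0" and \<delta>: "\<delta> \<in> Mg (-1)"
  shows "filt_exp scale F \<theta> (d (filt_exp scale F (\<lambda>x. - \<theta> x) z) + \<delta> (filt_exp scale F (\<lambda>x. - \<theta> x) z)) =
     d z + gauge scale d Mg MF \<theta> \<delta> z"
proof (rule eq_if_diff_in_Fil)
  fix N
  let ?L = "filt_exp scale F \<theta> (d (filt_exp scale F (\<lambda>x. - \<theta> x) z) + \<delta> (filt_exp scale F (\<lambda>x. - \<theta> x) z))"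
  let ?S = "\<Sum>n<N. scale (1 / fact n) ((ad \<theta> ^^ n) (\<lambda>y. d y + \<delta> y) z)"
  have "linear_map (\<lambda>y. d y + \<delta> y)"
    using vsp.linear_compose_add[OF linear_d linear_Mg[OF \<delta>]] .
  moreover have "d x + \<delta> x \<in> Fil j" if "x \<in> Fil j" for j x
    using Fil_add[OF d_Fil[OF that] Fil_mono_member[OF Mg_apply_Fil[OF \<delta> that]]] by simp
  ultimately have conjugate: "?L - ?S \<in> Fil N"
    by (rule filt_exp_conjugate_approx[OF raising_derivation_Mg_0[OF \<theta>]])
  have "?L - (d z + gauge scale d Mg MF \<theta> \<delta> z) =
      (?L - ?S) - (gauge scale d Mg MF \<theta> \<delta> z - (?S - d z))"
    by (simp add: algebra_simps)
  also have "\<dots> \<in> Fil N"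
    by (intro Fil_diff conjugate gauge_approx[OF \<theta> \<delta>])
  finally show "?L - (d z + gauge scale d Mg MF \<theta> \<delta> z) \<in> Fil N" .
qed

lemma dgl_iso_filt_exp_gauge:
  assumes \<theta>: "\<theta> \<in> Mg 0" and \<delta>: "\<delta> \<in> Mg (-1)"
  shows "dgl_iso scale Lg br (filt_exp scale F \<theta>) (\<lambda>x. d x + \<delta> x) (\<lambda>x. d x + gauge scale d Mg MF \<theta> \<delta> x)"
proof -
  have \<theta>': "raising_derivation \<theta>"
    using raising_derivation_Mg_0[OF \<theta>] .
  have "filt_exp scale F \<theta> (d x + \<delta> x) =
      d (filt_exp scale F \<theta> x) + gauge scale d Mg MF \<theta> \<delta> (filt_exp scale F \<theta> x)" for x
    using filt_exp_conjugate_eq_gauge[OF \<theta> \<delta>, of "filt_exp scale F \<theta> x"]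
      filt_exp_uminus_inverse[OF raising_derivation_uminus[OF \<theta>'], of x] by simp
  then show ?thesis
    unfolding dgl_iso_def
    using bij_filt_exp[OF \<theta>'] linear_filt_exp[OF \<theta>'] filt_exp_Lg[OF \<theta>'] filt_exp_br[OF \<theta>'] by blast
qed

lemma gauge_eq_if_dgl_iso:
  assumes \<theta>: "\<theta> \<in> Mg 0" and \<delta>: "\<delta> \<in> Mg (-1)"
    and iso: "dgl_iso scale Lg br (filt_exp scale F \<theta>) (\<lambda>x. d x + \<delta> x) (\<lambda>x. d x + \<eta> x)"
  shows "gauge scale d Mg MF \<theta> \<delta> = \<eta>"
proof
  fix z
  let ?w = "filt_exp scale F (\<lambda>x. - \<theta> x) z"
  have "filt_exp scale F \<theta> ?w = z"
    using filt_exp_uminus_inverse[OF raising_derivation_Mg_0[OF \<theta>]] .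
  moreover have "filt_exp scale F \<theta> (d ?w + \<delta> ?w) = d (filt_exp scale F \<theta> ?w) + \<eta> (filt_exp scale F \<theta> ?w)"
    using iso unfolding dgl_iso_def by blast
  ultimately show "gauge scale d Mg MF \<theta> \<delta> z = \<eta> z"
    using filt_exp_conjugate_eq_gauge[OF \<theta> \<delta>, of z] by simp
qed

end

theorem proposition2p1:
  fixes scale :: "rat \<Rightarrow> 'a::ab_group_add \<Rightarrow> 'a"
    and Lg :: "int \<Rightarrow> 'a set"
    and br :: "'a \<Rightarrow> 'a \<Rightarrow> 'a"
    and d :: "'a \<Rightarrow> 'a"
    and F :: "nat \<Rightarrow> 'a set"
    and Mg :: "int \<Rightarrow> ('a \<Rightarrow> 'a) set"
    and MF :: "nat \<Rightarrow> ('a \<Rightarrow> 'a) set"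
    and \<delta> \<eta> :: "'a \<Rightarrow> 'a"
  assumes L: "cdgl scale Lg br d F"
    and M: "complete_sub_dgl scale Lg br d F Mg MF"
    and \<delta>: "MC scale d Mg \<delta>"
    and \<eta>: "MC scale d Mg \<eta>"
  shows "(gauge_related scale d Mg MF \<delta> \<eta> \<longleftrightarrow>
           (\<exists>\<theta>\<in>Mg 0. dgl_iso scale Lg br (filt_exp scale F \<theta>)
                          (\<lambda>x. d x + \<delta> x) (\<lambda>x. d x + \<eta> x)))
       \<and> (\<forall>\<theta>\<in>Mg 0. dgl_iso scale Lg br (filt_exp scale F \<theta>) (\<lambda>x. d x + \<delta> x) (\<lambda>x. d x + \<eta> x)
              \<longrightarrow> gauge scale d Mg MF \<theta> \<delta> = \<eta>)"
proof -
  interpret complete_sub_dgl_of_Der scale Lg br d F Mg MF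
    using L M by (rule complete_sub_dgl_of_Der_if_complete_sub_dgl)
  have \<delta>_Mg: "\<delta> \<in> Mg (-1)"
    using \<delta> by (simp add: MC_def)
  have iso_iff_gauge: "dgl_iso scale Lg br (filt_exp scale F \<theta>) (\<lambda>x. d x + \<delta> x) (\<lambda>x. d x + \<eta> x)
      \<longleftrightarrow> gauge scale d Mg MF \<theta> \<delta> = \<eta>" if \<theta>: "\<theta> \<in> Mg 0" for \<theta>
  proof
    show "gauge scale d Mg MF \<theta> \<delta> = \<eta>"
      if "dgl_iso scale Lg br (filt_exp scale F \<theta>) (\<lambda>x. d x + \<delta> x) (\<lambda>x. d x + \<eta> x)"
      using gauge_eq_if_dgl_iso[OF \<theta> \<delta>_Mg that] .
    show "dgl_iso scale Lg br (filt_exp scale F \<theta>) (\<lambda>x. d x + \<delta> x) (\<lambda>x. d x + \<eta> x)"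
      if "gauge scale d Mg MF \<theta> \<delta> = \<eta>"
      using dgl_iso_filt_exp_gauge[OF \<theta> \<delta>_Mg] unfolding that .
  qed
  show ?thesis
    unfolding gauge_related_def by (simp add: iso_iff_gauge)
qed

end
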